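(* For every positive integer $n$, the number of ordered set partitions of $[n]$ into exactly $3$ blocks that avoid the pattern $123$ is $$\operatorname{op}_{n,3}(123) = \left(\frac{n^2}{8}+\frac{3n}{8}-2\right)2^n+3.$$
   Context: An ordered set partition of $[n]$ into $k$ blocks is a sequence $B_1/B_2/\cdots/B_k$ of nonempty, pairwise disjoint subsets of $[n]$ whose union is $[n]$; the order of the blocks matters, but not the order of elements within a block. For a permutation $\rho=\rho_1\cdots\rho_m\in\mathcal{S}_m$, an ordered partition $B_1/\cdots/B_k$ contains $\rho$ if there are block indices $i_1<i_2<\cdots<i_m$ and elements $b_j\in B_{i_j}$ such that $b_1\cdots b_m$ is order-isomorphic to $\rho$ (i.e. $b_a<b_c$ iff $\rho_a<\rho_c$); otherwise it avoids $\rho$. $\operatorname{op}_{n,k}(\rho)$ denotes the number of ordered partitions of $[n]$ into $k$ blocks that avoid $\rho$. *)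

theory Defs
  imports Complex_Main
begin

definition ordered_set_partitions :: "nat \<Rightarrow> nat \<Rightarrow> nat set list set" where
  "ordered_set_partitions n k =
     {Bs. length Bs = k \<and> (\<forall>B\<in>set Bs. B \<noteq> {}) \<and>
          (\<forall>i<k. \<forall>j<k. i \<noteq> j \<longrightarrow> Bs ! i \<inter> Bs ! j = {}) \<and>
          \<Union>(set Bs) = {1..n}}"

definition osp_contains :: "nat set list \<Rightarrow> nat list \<Rightarrow> bool" where
  "osp_contains Bs rho \<longleftrightarrow>
     (\<exists>idx b :: nat \<Rightarrow> nat.
        (\<forall>j<length rho. idx j < length Bs \<and> b j \<in> Bs ! (idx j)) \<and>
        (\<forall>a<length rho. \<forall>c<length rho. a < c \<longrightarrow> idx a < idx c) \<and>
        (\<forall>a<length rho. \<forall>c<length rho. b a < b c \<longleftrightarrow> rho ! a < rho ! c))"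

definition op_count :: "nat \<Rightarrow> nat \<Rightarrow> nat list \<Rightarrow> nat" where
  "op_count n k rho = card {Bs \<in> ordered_set_partitions n k. \<not> osp_contains Bs rho}"

end

theory Submission
  imports Defs "HOL-Library.Sublist"
begin

text \<open>
An ordered partition \<open>B\<^sub>0/B\<^sub>1/B\<^sub>2\<close> of \<open>[n]\<close> is the same thing as a word
\<open>w \<in> {0,1,2}\<^sup>n\<close> using every letter: its \<open>i\<close>-th letter is the index of the block
containing \<open>i + 1\<close>. The partition contains 123 exactly when \<open>0 1 2\<close> occurs in \<open>w\<close>
as a subsequence. Splitting words by their first letter, and using that a subsequence may be
matched greedily, the number of such words satisfies linear recurrences linking it to a small
family of refined counts (words avoiding \<open>1 2\<close> or \<open>0 1 2\<close>, with prescribed letters present),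
each of which has a closed form proved by induction on \<open>n\<close>.
\<close>

lemma subseq_iff_sorted_indices:
  "subseq xs ys \<longleftrightarrow>
     (\<exists>ks. sorted_wrt (<) ks \<and> (\<forall>i\<in>set ks. i < length ys) \<and> xs = map ((!) ys) ks)"
proof
  assume "subseq xs ys"
  then show "\<exists>ks. sorted_wrt (<) ks \<and> (\<forall>i\<in>set ks. i < length ys) \<and> xs = map ((!) ys) ks"
  proof induction
    case (list_emb_Nil ys)
    show ?case by (intro exI[of _ "[]"]) simp
  next
    case (list_emb_Cons xs ys y)
    then obtain ks where "sorted_wrt (<) ks" "\<forall>i\<in>set ks. i < length ys" "xs = map ((!) ys) ks"
      by blast
    then show ?case by (intro exI[of _ "map Suc ks"]) (auto simp: sorted_wrt_map)
  next
    case (list_emb_Cons2 x y xs ys)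
    then obtain ks where "sorted_wrt (<) ks" "\<forall>i\<in>set ks. i < length ys" "xs = map ((!) ys) ks"
      by blast
    then show ?case using list_emb_Cons2.hyps(1)
      by (intro exI[of _ "0 # map Suc ks"]) (auto simp: sorted_wrt_map)
  qed
next
  assume "\<exists>ks. sorted_wrt (<) ks \<and> (\<forall>i\<in>set ks. i < length ys) \<and> xs = map ((!) ys) ks"
  then obtain ks where "sorted_wrt (<) ks" "\<forall>i\<in>set ks. i < length ys" "xs = map ((!) ys) ks"
    by blast
  then show "subseq xs ys"
  proof (induction ys arbitrary: xs ks)
    case Nil
    then show ?case by (cases ks) auto
  next
    case (Cons y ys)
    have shift: "map ((!) (y # ys)) js = map ((!) ys) (map (\<lambda>i. i - 1) js)"
      and sorted: "sorted_wrt (<) (map (\<lambda>i. i - 1) js)"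
      and bounded: "\<forall>i\<in>set (map (\<lambda>i. i - 1) js). i < length ys"
      if "sorted_wrt (<) js" "\<forall>i\<in>set js. 0 < i" "\<forall>i\<in>set js. i < length (y # ys)" for js
    proof -
      show "map ((!) (y # ys)) js = map ((!) ys) (map (\<lambda>i. i - 1) js)"
        using that(2) by (auto simp: nth_Cons')
      show "sorted_wrt (<) (map (\<lambda>i. i - 1) js)"
        unfolding sorted_wrt_map
        by (rule sorted_wrt_mono_rel[OF _ that(1)]) (use that(2) in auto)
      show "\<forall>i\<in>set (map (\<lambda>i. i - 1) js). i < length ys"
        using that(2,3) by auto
    qed
    \<comment> \<open>an index 0 matches \<open>y\<close>; all remaining indices are shifted down into \<open>ys\<close>\<close>
    show ?case
    proof (cases ks)
      case Nil
      then show ?thesis using Cons.prems by simp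
    next
      case (Cons k ks')
      show ?thesis
      proof (cases "k = 0")
        case True
        have ks': "sorted_wrt (<) ks'" "\<forall>i\<in>set ks'. 0 < i" "\<forall>i\<in>set ks'. i < length (y # ys)"
          using Cons.prems(1,2) \<open>ks = k # ks'\<close> True by auto
        have "subseq (map ((!) (y # ys)) ks') ys"
          unfolding shift[OF ks'] by (rule Cons.IH[OF sorted[OF ks'] bounded[OF ks'] refl])
        then show ?thesis
          using Cons.prems(3) \<open>ks = k # ks'\<close> True by simp
      next
        case False
        have "\<forall>i\<in>set ks. 0 < i"
          using Cons.prems(1) \<open>ks = k # ks'\<close> False by auto
        note ks = Cons.prems(1) this Cons.prems(2)
        have "subseq xs ys"
          unfolding Cons.prems(3) shift[OF ks] by (rule Cons.IH[OF sorted[OF ks] bounded[OF ks] refl])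
        then show ?thesis by (rule list_emb_Cons)
      qed
    qed
  qed
qed

lemma subseq_three_iff:
  "subseq [a, b, c] w \<longleftrightarrow>
     (\<exists>i j k. i < j \<and> j < k \<and> k < length w \<and> w ! i = a \<and> w ! j = b \<and> w ! k = c)"
  (is "_ \<longleftrightarrow> ?indices")
proof
  assume "subseq [a, b, c] w"
  then obtain ks where ks: "sorted_wrt (<) ks" "\<forall>i\<in>set ks. i < length w" "[a, b, c] = map ((!) w) ks"
    unfolding subseq_iff_sorted_indices by (elim exE conjE)
  have "length ks = 3"
    using arg_cong[where f = length, OF ks(3)] by simp
  then obtain i j k where "ks = [i, j, k]"
    by (auto simp: numeral_3_eq_3 length_Suc_conv)
  with ks show ?indices
    by auto
next
  assume ?indices
  then obtain i j k where "i < j" "j < k" "k < length w" "w ! i = a" "w ! j = b" "w ! k = c"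
    by blast
  then show "subseq [a, b, c] w"
    unfolding subseq_iff_sorted_indices by (intro exI[of _ "[i, j, k]"]) auto
qed

definition count_words :: "'a set \<Rightarrow> nat \<Rightarrow> ('a list \<Rightarrow> bool) \<Rightarrow> nat" where
  "count_words A n P = card {w. length w = n \<and> set w \<subseteq> A \<and> P w}"

lemma finite_words_with:
  "finite A \<Longrightarrow> finite {w. length w = n \<and> set w \<subseteq> A \<and> P w}"
  by (rule finite_subset[OF _ finite_lists_length_eq[of A n]]) auto

lemma count_words_0: "count_words A 0 P = (if P [] then 1 else 0)"
proof -
  have "{w. length w = 0 \<and> set w \<subseteq> A \<and> P w} = (if P [] then {[]} else {})"
    by auto
  then show ?thesis
    by (simp add: count_words_def)
qed

lemma count_words_False: "count_words A n (\<lambda>_. False) = 0"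
  by (simp add: count_words_def)

lemma count_words_Suc:
  assumes "finite A"
  shows "count_words A (Suc n) P = (\<Sum>a\<in>A. count_words A n (\<lambda>w. P (a # w)))"
proof -
  let ?W = "\<lambda>a. {w. length w = n \<and> set w \<subseteq> A \<and> P (a # w)}"
  have "{w. length w = Suc n \<and> set w \<subseteq> A \<and> P w} = (\<Union>a\<in>A. (#) a ` ?W a)"
    by (auto simp: length_Suc_conv)
  then have "count_words A (Suc n) P = card (\<Union>a\<in>A. (#) a ` ?W a)"
    by (simp add: count_words_def)
  also have "\<dots> = (\<Sum>a\<in>A. card ((#) a ` ?W a))"
    using assms by (intro card_UN_disjoint) (auto intro: finite_words_with)
  also have "\<dots> = (\<Sum>a\<in>A. count_words A n (\<lambda>w. P (a # w)))"
    by (simp add: card_image count_words_def)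
  finally show ?thesis .
qed

lemma count_words_cong:
  "(\<And>w. set w \<subseteq> A \<Longrightarrow> P w = Q w) \<Longrightarrow> count_words A n P = count_words A n Q"
  unfolding count_words_def by (metis (mono_tags, lifting))

abbreviation ternary_count :: "nat \<Rightarrow> (nat list \<Rightarrow> bool) \<Rightarrow> nat" where
  "ternary_count \<equiv> count_words {0, 1, 2}"

lemma ternary_count_Suc:
  assumes "\<And>w. set w \<subseteq> {0, 1, 2} \<Longrightarrow> P (0 # w) = P\<^sub>0 w"
    and "\<And>w. set w \<subseteq> {0, 1, 2} \<Longrightarrow> P (1 # w) = P\<^sub>1 w"
    and "\<And>w. set w \<subseteq> {0, 1, 2} \<Longrightarrow> P (2 # w) = P\<^sub>2 w"
  shows "ternary_count (Suc n) P =
           ternary_count n P\<^sub>0 + ternary_count n P\<^sub>1 + ternary_count n P\<^sub>2"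
proof -
  have "ternary_count n (\<lambda>w. P (0 # w)) = ternary_count n P\<^sub>0"
    "ternary_count n (\<lambda>w. P (1 # w)) = ternary_count n P\<^sub>1"
    "ternary_count n (\<lambda>w. P (2 # w)) = ternary_count n P\<^sub>2"
    using assms by (auto intro: count_words_cong)
  then show ?thesis
    by (simp add: count_words_Suc)
qed

lemma ternary_count_without_2: "ternary_count n (\<lambda>w. 2 \<notin> set w) = 2 ^ n"
proof -
  have "{w. length w = n \<and> set w \<subseteq> {0, 1, 2 :: nat} \<and> 2 \<notin> set w} =
        {w. set w \<subseteq> {0, 1} \<and> length w = n}"
    by auto
  then show ?thesis
    by (simp add: count_words_def card_lists_length_eq numeral_2_eq_2)
qed

lemma ternary_count_avoiding_12:
  "real (ternary_count n (\<lambda>w. \<not> subseq [1, 2] w)) = (real n + 2) * 2 ^ n / 2"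
proof (induction n)
  case (Suc n)
  have "ternary_count (Suc n) (\<lambda>w. \<not> subseq [1, 2] w) =
        ternary_count n (\<lambda>w. \<not> subseq [1, 2] w) + ternary_count n (\<lambda>w. 2 \<notin> set w)
          + ternary_count n (\<lambda>w. \<not> subseq [1, 2] w)"
    by (rule ternary_count_Suc) (auto simp: subseq_singleton_left)
  then show ?case
    using Suc.IH ternary_count_without_2[of n] by (simp add: field_simps)
qed (simp add: count_words_0)

lemma ternary_count_avoiding_12_with_1:
  "real (ternary_count n (\<lambda>w. \<not> subseq [1, 2] w \<and> 1 \<in> set w)) = real n * 2 ^ n / 2"
proof (induction n)
  case (Suc n)
  have "ternary_count (Suc n) (\<lambda>w. \<not> subseq [1, 2] w \<and> 1 \<in> set w) =
        ternary_count n (\<lambda>w. \<not> subseq [1, 2] w \<and> 1 \<in> set w)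
          + ternary_count n (\<lambda>w. 2 \<notin> set w)
          + ternary_count n (\<lambda>w. \<not> subseq [1, 2] w \<and> 1 \<in> set w)"
    by (rule ternary_count_Suc) (auto simp: subseq_singleton_left)
  then show ?case
    using Suc.IH ternary_count_without_2[of n] by (simp add: field_simps)
qed (simp add: count_words_0)

lemma ternary_count_avoiding_12_with_2:
  "real (ternary_count n (\<lambda>w. \<not> subseq [1, 2] w \<and> 2 \<in> set w)) = real n * 2 ^ n / 2"
proof (induction n)
  case (Suc n)
  have "ternary_count (Suc n) (\<lambda>w. \<not> subseq [1, 2] w \<and> 2 \<in> set w) =
        ternary_count n (\<lambda>w. \<not> subseq [1, 2] w \<and> 2 \<in> set w)
          + ternary_count n (\<lambda>w. False)
          + ternary_count n (\<lambda>w. \<not> subseq [1, 2] w)"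
    by (rule ternary_count_Suc) (auto simp: subseq_singleton_left)
  then show ?case
    using Suc.IH ternary_count_avoiding_12[of n]
    by (simp add: count_words_False field_simps)
qed (simp add: count_words_0)

lemma ternary_count_avoiding_12_with_1_2:
  "real (ternary_count n (\<lambda>w. \<not> subseq [1, 2] w \<and> 1 \<in> set w \<and> 2 \<in> set w)) =
     (real n - 2) * 2 ^ n / 2 + 1"
proof (induction n)
  case (Suc n)
  have "ternary_count (Suc n) (\<lambda>w. \<not> subseq [1, 2] w \<and> 1 \<in> set w \<and> 2 \<in> set w) =
        ternary_count n (\<lambda>w. \<not> subseq [1, 2] w \<and> 1 \<in> set w \<and> 2 \<in> set w)
          + ternary_count n (\<lambda>w. False)
          + ternary_count n (\<lambda>w. \<not> subseq [1, 2] w \<and> 1 \<in> set w)"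
    by (rule ternary_count_Suc) (auto simp: subseq_singleton_left)
  then show ?case
    using Suc.IH ternary_count_avoiding_12_with_1[of n]
    by (simp add: count_words_False field_simps)
qed (simp add: count_words_0)

lemma ternary_count_avoiding_012_with_0:
  "real (ternary_count n (\<lambda>w. \<not> subseq [0, 1, 2] w \<and> 0 \<in> set w)) =
     real n * (real n + 3) * 2 ^ n / 8"
proof (induction n)
  case (Suc n)
  have "ternary_count (Suc n) (\<lambda>w. \<not> subseq [0, 1, 2] w \<and> 0 \<in> set w) =
        ternary_count n (\<lambda>w. \<not> subseq [1, 2] w)
          + ternary_count n (\<lambda>w. \<not> subseq [0, 1, 2] w \<and> 0 \<in> set w)
          + ternary_count n (\<lambda>w. \<not> subseq [0, 1, 2] w \<and> 0 \<in> set w)"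
    by (rule ternary_count_Suc) auto
  then show ?case
    using Suc.IH ternary_count_avoiding_12[of n] by (simp add: field_simps)
qed (simp add: count_words_0)

lemma ternary_count_avoiding_012_with_0_1:
  "real (ternary_count n (\<lambda>w. \<not> subseq [0, 1, 2] w \<and> 0 \<in> set w \<and> 1 \<in> set w)) =
     real n * (real n + 3) * 2 ^ n / 8 - 2 ^ n + 1"
proof (induction n)
  case (Suc n)
  have "ternary_count (Suc n) (\<lambda>w. \<not> subseq [0, 1, 2] w \<and> 0 \<in> set w \<and> 1 \<in> set w) =
        ternary_count n (\<lambda>w. \<not> subseq [1, 2] w \<and> 1 \<in> set w)
          + ternary_count n (\<lambda>w. \<not> subseq [0, 1, 2] w \<and> 0 \<in> set w)
          + ternary_count n (\<lambda>w. \<not> subseq [0, 1, 2] w \<and> 0 \<in> set w \<and> 1 \<in> set w)"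
    by (rule ternary_count_Suc) auto
  then show ?case
    using Suc.IH ternary_count_avoiding_12_with_1[of n] ternary_count_avoiding_012_with_0[of n]
    by (simp add: field_simps)
qed (simp add: count_words_0)

lemma ternary_count_avoiding_012_with_0_2:
  "real (ternary_count n (\<lambda>w. \<not> subseq [0, 1, 2] w \<and> 0 \<in> set w \<and> 2 \<in> set w)) =
     real n * (real n + 3) * 2 ^ n / 8 - 2 ^ n + 1"
proof (induction n)
  case (Suc n)
  have "ternary_count (Suc n) (\<lambda>w. \<not> subseq [0, 1, 2] w \<and> 0 \<in> set w \<and> 2 \<in> set w) =
        ternary_count n (\<lambda>w. \<not> subseq [1, 2] w \<and> 2 \<in> set w)
          + ternary_count n (\<lambda>w. \<not> subseq [0, 1, 2] w \<and> 0 \<in> set w \<and> 2 \<in> set w)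
          + ternary_count n (\<lambda>w. \<not> subseq [0, 1, 2] w \<and> 0 \<in> set w)"
    by (rule ternary_count_Suc) auto
  then show ?case
    using Suc.IH ternary_count_avoiding_12_with_2[of n] ternary_count_avoiding_012_with_0[of n]
    by (simp add: field_simps)
qed (simp add: count_words_0)

lemma ternary_count_avoiding_012_with_0_1_2:
  assumes "n \<ge> 1"
  shows "real (ternary_count n
                 (\<lambda>w. \<not> subseq [0, 1, 2] w \<and> 0 \<in> set w \<and> 1 \<in> set w \<and> 2 \<in> set w)) =
           ((real n)^2 / 8 + 3 * real n / 8 - 2) * 2 ^ n + 3"
proof -
  obtain m where n: "n = Suc m"
    using assms by (cases n) auto
  have "ternary_count (Suc m)
          (\<lambda>w. \<not> subseq [0, 1, 2] w \<and> 0 \<in> set w \<and> 1 \<in> set w \<and> 2 \<in> set w) =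
        ternary_count m (\<lambda>w. \<not> subseq [1, 2] w \<and> 1 \<in> set w \<and> 2 \<in> set w)
          + ternary_count m (\<lambda>w. \<not> subseq [0, 1, 2] w \<and> 0 \<in> set w \<and> 2 \<in> set w)
          + ternary_count m (\<lambda>w. \<not> subseq [0, 1, 2] w \<and> 0 \<in> set w \<and> 1 \<in> set w)"
    by (rule ternary_count_Suc) auto
  then show ?thesis
    using ternary_count_avoiding_12_with_1_2[of m] ternary_count_avoiding_012_with_0_1[of m]
      ternary_count_avoiding_012_with_0_2[of m]
    unfolding n by (simp add: field_simps power2_eq_square)
qed

lemma card_filter_bij_betw:
  assumes "bij_betw f A B"
  shows "card {b \<in> B. P b} = card {a \<in> A. P (f a)}"
proof -
  have "f ` {a \<in> A. P (f a)} = {b \<in> B. P b}"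
    using assms by (auto simp: bij_betw_def)
  then have "bij_betw f {a \<in> A. P (f a)} {b \<in> B. P b}"
    by (rule bij_betw_subset[OF assms, rotated]) auto
  then show ?thesis
    by (simp add: bij_betw_same_card)
qed

definition word_blocks :: "nat \<Rightarrow> nat list \<Rightarrow> nat set list" where
  "word_blocks k w = map (\<lambda>j. {Suc i |i. i < length w \<and> w ! i = j}) [0..<k]"

lemma length_word_blocks [simp]: "length (word_blocks k w) = k"
  by (simp add: word_blocks_def)

lemma nth_word_blocks [simp]:
  "j < k \<Longrightarrow> word_blocks k w ! j = {Suc i |i. i < length w \<and> w ! i = j}"
  by (simp add: word_blocks_def)

lemma word_blocks_in_ordered_set_partitions:
  assumes "length w = n" "set w = {..<k}"
  shows "word_blocks k w \<in> ordered_set_partitions n k"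
  unfolding ordered_set_partitions_def
proof (intro CollectI conjI allI impI ballI)
  fix B assume "B \<in> set (word_blocks k w)"
  then obtain j where "j < k" "B = word_blocks k w ! j"
    by (auto simp: in_set_conv_nth)
  moreover from \<open>j < k\<close> obtain i where "i < length w" "w ! i = j"
    using assms(2) by (metis in_set_conv_nth lessThan_iff)
  ultimately show "B \<noteq> {}"
    by auto
next
  show "\<Union> (set (word_blocks k w)) = {1..n}"
  proof (intro equalityI subsetI)
    fix x assume "x \<in> {1..n}"
    then obtain i where i: "x = Suc i" "i < length w"
      using assms(1) by (cases x) auto
    then have "w ! i < k"
      using assms(2) nth_mem by blast
    then have "word_blocks k w ! (w ! i) \<in> set (word_blocks k w)"
      by (metis length_word_blocks nth_mem)
    moreover have "x \<in> word_blocks k w ! (w ! i)"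
      using i \<open>w ! i < k\<close> by auto
    ultimately show "x \<in> \<Union> (set (word_blocks k w))"
      by blast
  qed (use assms(1) in \<open>auto simp: in_set_conv_nth\<close>)
qed auto

lemma inj_on_word_blocks: "inj_on (word_blocks k) {w. length w = n \<and> set w \<subseteq> {..<k}}"
proof (rule inj_onI)
  fix v w
  assume v: "v \<in> {w. length w = n \<and> set w \<subseteq> {..<k}}"
    and w: "w \<in> {w. length w = n \<and> set w \<subseteq> {..<k}}"
    and eq: "word_blocks k v = word_blocks k w"
  show "v = w"
  proof (rule nth_equalityI)
    show "length v = length w"
      using v w by simp
    fix i assume "i < length v"
    then have "v ! i < k" "Suc i \<in> word_blocks k v ! (v ! i)"
      using v nth_mem by fastforce+
    then have "Suc i \<in> word_blocks k w ! (v ! i)"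
      by (simp only: eq)
    with \<open>v ! i < k\<close> show "v ! i = w ! i"
      by auto
  qed
qed

lemma ordered_set_partition_unique_block:
  assumes "Bs \<in> ordered_set_partitions n k" "x \<in> {1..n}"
  shows "\<exists>!j. j < k \<and> x \<in> Bs ! j"
proof -
  have "length Bs = k" "\<Union> (set Bs) = {1..n}"
    and disjoint: "\<And>i j. i < k \<Longrightarrow> j < k \<Longrightarrow> i \<noteq> j \<Longrightarrow> Bs ! i \<inter> Bs ! j = {}"
    using assms(1) by (auto simp: ordered_set_partitions_def)
  then obtain B where "B \<in> set Bs" "x \<in> B"
    using assms(2) by blast
  then obtain j where j: "j < k" "x \<in> Bs ! j"
    using \<open>length Bs = k\<close> by (auto simp: in_set_conv_nth)
  show ?thesis
  proof (rule ex1I[of _ j])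
    show "j' = j" if "j' < k \<and> x \<in> Bs ! j'" for j'
      using that j disjoint[of j' j] by blast
  qed (use j in blast)
qed

lemma word_blocks_surj:
  assumes "Bs \<in> ordered_set_partitions n k"
  obtains w where "length w = n" "set w = {..<k}" "word_blocks k w = Bs"
proof
  define w where "w = map (\<lambda>i. THE j. j < k \<and> Suc i \<in> Bs ! j) [0..<n]"
  have block: "w ! i < k \<and> Suc i \<in> Bs ! (w ! i)" if "i < n" for i
  proof -
    have "\<exists>!j. j < k \<and> Suc i \<in> Bs ! j"
      using that by (intro ordered_set_partition_unique_block[OF assms]) auto
    then have "(THE j. j < k \<and> Suc i \<in> Bs ! j) < k \<and> Suc i \<in> Bs ! (THE j. j < k \<and> Suc i \<in> Bs ! j)"
      by (rule theI')
    then show ?thesis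
      using that unfolding w_def by simp
  qed
  have block_eq: "w ! i = j" if "i < n" "j < k" "Suc i \<in> Bs ! j" for i j
    using block[OF that(1)] that ordered_set_partition_unique_block[OF assms, of "Suc i"] by auto
  have Bs: "length Bs = k" "\<forall>B\<in>set Bs. B \<noteq> {}" "\<Union> (set Bs) = {1..n}"
    using assms by (auto simp: ordered_set_partitions_def)
  show "length w = n"
    by (simp add: w_def)
  have blocks: "word_blocks k w ! j = Bs ! j" if "j < k" for j
  proof (intro equalityI subsetI)
    fix x assume "x \<in> word_blocks k w ! j"
    with that block show "x \<in> Bs ! j"
      by (auto simp: \<open>length w = n\<close>)
  next
    fix x assume "x \<in> Bs ! j"
    then have "x \<in> {1..n}"
      using Bs(1,3) that nth_mem by blast
    then obtain i where "x = Suc i" "i < n"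
      by (cases x) auto
    with that \<open>x \<in> Bs ! j\<close> show "x \<in> word_blocks k w ! j"
      using block_eq \<open>length w = n\<close> by auto
  qed
  show "word_blocks k w = Bs"
    using blocks Bs(1) by (intro nth_equalityI) simp_all
  show "set w = {..<k}"
  proof (intro equalityI subsetI)
    show "j \<in> {..<k}" if "j \<in> set w" for j
      using that block by (auto simp: in_set_conv_nth \<open>length w = n\<close>)
  next
    fix j assume "j \<in> {..<k}"
    then obtain x where "x \<in> Bs ! j"
      using Bs(1,2) nth_mem by fastforce
    then have "x \<in> word_blocks k w ! j"
      using blocks \<open>j \<in> {..<k}\<close> by simp
    then show "j \<in> set w"
      using \<open>j \<in> {..<k}\<close> by auto
  qed
qed

lemma bij_betw_word_blocks:
  "bij_betw (word_blocks k) {w. length w = n \<and> set w = {..<k}} (ordered_set_partitions n k)"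
proof (rule bij_betw_imageI)
  show "inj_on (word_blocks k) {w. length w = n \<and> set w = {..<k}}"
    by (rule inj_on_subset[OF inj_on_word_blocks[of k n]]) blast
  show "word_blocks k ` {w. length w = n \<and> set w = {..<k}} = ordered_set_partitions n k"
  proof (intro equalityI subsetI)
    show "Bs \<in> ordered_set_partitions n k"
      if "Bs \<in> word_blocks k ` {w. length w = n \<and> set w = {..<k}}" for Bs
      using that word_blocks_in_ordered_set_partitions by blast
  next
    fix Bs assume "Bs \<in> ordered_set_partitions n k"
    then obtain w where "length w = n" "set w = {..<k}" "word_blocks k w = Bs"
      by (rule word_blocks_surj)
    then show "Bs \<in> word_blocks k ` {w. length w = n \<and> set w = {..<k}}"
      by blast
  qed
qed

lemma osp_contains_123_iff:
  assumes "length Bs = 3"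
  shows "osp_contains Bs [1, 2, 3] \<longleftrightarrow>
           (\<exists>x y z. x < y \<and> y < z \<and> x \<in> Bs ! 0 \<and> y \<in> Bs ! 1 \<and> z \<in> Bs ! 2)"
proof
  assume "osp_contains Bs [1, 2, 3]"
  then obtain idx b :: "nat \<Rightarrow> nat" where
    mem: "\<forall>j<length [1, 2, 3 :: nat]. idx j < length Bs \<and> b j \<in> Bs ! idx j" and
    idx: "\<forall>a<length [1, 2, 3 :: nat]. \<forall>c<length [1, 2, 3 :: nat]. a < c \<longrightarrow> idx a < idx c" and
    b: "\<forall>a<length [1, 2, 3 :: nat]. \<forall>c<length [1, 2, 3 :: nat].
          b a < b c \<longleftrightarrow> [1, 2, 3 :: nat] ! a < [1, 2, 3] ! c"
    unfolding osp_contains_def by blast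
  have "idx 0 < idx 1" "idx 1 < idx 2" "idx 2 < 3"
    using mem idx assms by auto
  then have "idx 0 = 0" "idx 1 = 1" "idx 2 = 2"
    by auto
  moreover have "b 0 < b 1" "b 1 < b 2" "b 0 \<in> Bs ! idx 0" "b 1 \<in> Bs ! idx 1" "b 2 \<in> Bs ! idx 2"
    using b mem by auto
  ultimately show "\<exists>x y z. x < y \<and> y < z \<and> x \<in> Bs ! 0 \<and> y \<in> Bs ! 1 \<and> z \<in> Bs ! 2"
    by auto
next
  assume "\<exists>x y z. x < y \<and> y < z \<and> x \<in> Bs ! 0 \<and> y \<in> Bs ! 1 \<and> z \<in> Bs ! 2"
  then obtain x y z where xyz: "x < y" "y < z" "x \<in> Bs ! 0" "y \<in> Bs ! 1" "z \<in> Bs ! 2"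
    by blast
  show "osp_contains Bs [1, 2, 3]"
    unfolding osp_contains_def
    by (rule exI[of _ "\<lambda>j. j"], rule exI[of _ "(!) [x, y, z]"])
      (use xyz assms in \<open>auto simp: less_Suc_eq numeral_3_eq_3 numeral_2_eq_2\<close>)
qed

lemma word_blocks_contains_123_iff:
  "osp_contains (word_blocks 3 w) [1, 2, 3] \<longleftrightarrow> subseq [0, 1, 2] w"
  unfolding osp_contains_123_iff[OF length_word_blocks] subseq_three_iff
proof
  assume "\<exists>x y z. x < y \<and> y < z \<and> x \<in> word_blocks 3 w ! 0 \<and> y \<in> word_blocks 3 w ! 1 \<and>
                     z \<in> word_blocks 3 w ! 2"
  then show "\<exists>i j k. i < j \<and> j < k \<and> k < length w \<and> w ! i = 0 \<and> w ! j = 1 \<and> w ! k = 2"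
    by auto
next
  assume "\<exists>i j k. i < j \<and> j < k \<and> k < length w \<and> w ! i = 0 \<and> w ! j = 1 \<and> w ! k = 2"
  then obtain i j k where "i < j" "j < k" "k < length w" "w ! i = 0" "w ! j = 1" "w ! k = 2"
    by blast
  then show "\<exists>x y z. x < y \<and> y < z \<and> x \<in> word_blocks 3 w ! 0 \<and> y \<in> word_blocks 3 w ! 1 \<and>
                     z \<in> word_blocks 3 w ! 2"
    by (intro exI[of _ "Suc i"] exI[of _ "Suc j"] exI[of _ "Suc k"]) auto
qed
lemma op_count_123_eq_ternary_count:
  "op_count n 3 [1, 2, 3] =
     ternary_count n (\<lambda>w. \<not> subseq [0, 1, 2] w \<and> 0 \<in> set w \<and> 1 \<in> set w \<and> 2 \<in> set w)"
proof -
  have "{..<3 :: nat} = {0, 1, 2}"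
    by (auto simp: numeral_3_eq_3 lessThan_Suc)
  then have alphabet:
    "set w = {..<3} \<longleftrightarrow> set w \<subseteq> {0, 1, 2} \<and> 0 \<in> set w \<and> 1 \<in> set w \<and> 2 \<in> set w"
    for w :: "nat list"
    by (simp only:) blast
  have "op_count n 3 [1, 2, 3] =
        card {w \<in> {w. length w = n \<and> set w = {..<3}}. \<not> osp_contains (word_blocks 3 w) [1, 2, 3]}"
    unfolding op_count_def by (rule card_filter_bij_betw[OF bij_betw_word_blocks])
  also have "\<dots> = ternary_count n
                    (\<lambda>w. \<not> subseq [0, 1, 2] w \<and> 0 \<in> set w \<and> 1 \<in> set w \<and> 2 \<in> set w)"
    unfolding count_words_def word_blocks_contains_123_iff
    by (intro arg_cong[where f = card] Collect_cong) (auto simp only: alphabet mem_Collect_eq)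
  finally show ?thesis .
qed

theorem theorem2:
  fixes n :: nat
  assumes "n \<ge> 1"
  shows "real (op_count n 3 [1,2,3]) =
           ((real n)^2 / 8 + 3 * real n / 8 - 2) * 2 ^ n + 3"
  using op_count_123_eq_ternary_count ternary_count_avoiding_012_with_0_1_2[OF assms] by simp

end
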